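(* For every integer $0\le t<(q+1)/d$, the number $l(t,0)$ of polynomials $L\in\mathbb F_{q^2}[X]$ with $\deg L=t$, $\tilde L=L$ and $\gcd(L,X^{(q+1)/d}-1)=1$ equals $$l(t,0)=(q^2-1)\sum_{i=0}^{t-1}(-1)^i\binom{(q+1)/d}{i}q^{t-i-1}+(-1)^t(q-1)\binom{(q+1)/d}{t}.$$
   Context: $q$ is a prime power and $d$ is a positive divisor of $q+1$. For $a\in\mathbb F_{q^2}$, $\bar a=a^q$; for $f(X)=\sum_{i=0}^n a_iX^i\in\mathbb F_{q^2}[X]$ with $a_n\neq0$, $\tilde f(X)=\sum_{i=0}^n\bar a_iX^{n-i}$. *)

theory Defs
  imports "HOL-Computational_Algebra.Computational_Algebra"
begin

definition conjq :: "nat \<Rightarrow> 'a::field \<Rightarrow> 'a" where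
  "conjq q a = a ^ q"

definition tilde :: "nat \<Rightarrow> 'a::field poly \<Rightarrow> 'a poly" where
  "tilde q f = (\<Sum>i\<le>degree f. monom (conjq q (coeff f i)) (degree f - i))"

end

theory Submission
  imports Defs "HOL-Number_Theory.Residues"
begin

text \<open>
  Call \<open>L\<close> self-reciprocal if \<open>tilde q L = L\<close>, i.e. its coefficients satisfy
  \<open>a\<^sub>j = a\<^sub>t\<^sub>-\<^sub>j\<^sup>q\<close>. Writing such a polynomial of degree \<open>t + 2\<close> as \<open>a\<^sup>q + X M + a X\<^sup>t\<^sup>+\<^sup>2\<close> with
  \<open>a \<noteq> 0\<close> and \<open>M\<close> satisfying the same symmetry for formal degree \<open>t\<close> shows that there are
  \<open>q - 1\<close> of them in degree 0 and \<open>(q\<^sup>2 - 1) q\<^sup>t\<^sup>-\<^sup>1\<close> in degree \<open>t > 0\<close>. Every \<open>m\<close>-th root of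
  unity \<open>z\<close> (\<open>m\<close> dividing \<open>q + 1\<close>) has norm \<open>z\<^sup>q\<^sup>+\<^sup>1 = 1\<close>, so by Hilbert 90 it is the only root
  of some self-reciprocal linear polynomial \<open>g\<close>; dividing by \<open>g\<close> matches the self-reciprocal
  polynomials of degree \<open>t + 1\<close> vanishing at \<open>z\<close> with all those of degree \<open>t\<close>. Removing the
  roots of unity one at a time therefore produces the alternating binomial sum, and
  \<open>gcd L (X\<^sup>m - 1) = 1\<close> just says that no \<open>m\<close>-th root of unity is a root of \<open>L\<close>.
\<close>

(* Residues, imported for CHAR_dvd_CARD, brings HOL-Algebra's polynomial constants along. *)
hide_const (open) up_ring.monom up_ring.coeff

section \<open>Roots of unity in finite fields\<close>

lemma power_card_minus_one_eq_1:
  fixes x :: "'a::{finite,field}"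
  assumes "x \<noteq> 0"
  shows "x ^ (card (UNIV :: 'a set) - 1) = 1"
proof -
  let ?U = "UNIV - {0 :: 'a}"
  have "(\<Prod>y\<in>?U. x * y) = (\<Prod>y\<in>?U. y)"
    by (rule prod.reindex_bij_witness[of _ "\<lambda>y. y / x" "\<lambda>y. x * y"]) (use assms in auto)
  moreover have "(\<Prod>y\<in>?U. x * y) = x ^ card ?U * (\<Prod>y\<in>?U. y)"
    by (simp add: prod.distrib)
  moreover have "(\<Prod>y\<in>?U. y) \<noteq> 0"
    by simp
  ultimately show ?thesis
    by (simp add: card_Diff_singleton)
qed

lemma power_card_eq_self:
  fixes x :: "'a::{finite,field}"
  shows "x ^ card (UNIV :: 'a set) = x"
proof (cases "x = 0")
  case False
  have "card (UNIV :: 'a set) = Suc (card (UNIV :: 'a set) - 1)"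
    using finite_UNIV_card_ge_0[where 'a='a] by simp
  then have "x ^ card (UNIV :: 'a set) = x * x ^ (card (UNIV :: 'a set) - 1)"
    by (metis power_Suc)
  then show ?thesis
    using power_card_minus_one_eq_1[OF False] by simp
qed (simp add: finite_UNIV_card_ge_0)

lemma card_UNIV_field_ge_2: "card (UNIV :: 'a::{finite,field} set) \<ge> 2"
proof -
  have "card {0, 1 :: 'a} = 2"
    by simp
  then show ?thesis
    by (metis card_mono finite subset_UNIV)
qed

lemma card_fibres_eq_if_bounded:
  assumes "finite A" "finite B" "f ` A \<subseteq> B" "card B \<le> k" "card A = k * n"
    and fibre_le: "\<And>b. b \<in> B \<Longrightarrow> card {a\<in>A. f a = b} \<le> n"
    and "b \<in> B"
  shows "card {a\<in>A. f a = b} = n"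
proof -
  have partition: "A = (\<Union>b\<in>B. {a\<in>A. f a = b})"
    using assms(3) by auto
  have "card A = (\<Sum>b\<in>B. card {a\<in>A. f a = b})"
    by (subst partition, rule card_UN_disjoint) (use assms(1,2) in auto)
  moreover have "(\<Sum>b\<in>B. card {a\<in>A. f a = b}) \<le> (\<Sum>b\<in>B. n)"
    by (rule sum_mono) (rule fibre_le)
  moreover have "(\<Sum>b\<in>B. n) \<le> card A"
    using assms(4,5) by simp
  ultimately have "(\<Sum>b\<in>B. card {a\<in>A. f a = b}) = (\<Sum>b\<in>B. n)"
    by linarith
  from sum_mono_inv[OF this fibre_le \<open>b \<in> B\<close> \<open>finite B\<close>] show ?thesis .
qed

lemma card_power_eq_le:
  fixes c :: "'a::field"
  assumes "n > 0"
  shows "card {x. x ^ n = c} \<le> n"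
proof -
  define P where "P = monom 1 n - [:c:]"
  have deg: "degree P = n"
    unfolding P_def using assms by (simp add: diff_conv_add_uminus degree_add_eq_left degree_monom_eq)
  then have "P \<noteq> 0"
    using assms by auto
  moreover have "{x. x ^ n = c} = {x. poly P x = 0}"
    unfolding P_def by (simp add: poly_monom)
  ultimately show ?thesis
    using card_poly_roots_bound[of P] deg by simp
qed

text \<open>
  Counting argument: \<open>x \<mapsto> x\<^sup>n\<close> maps the \<open>n k\<close> units into the at most \<open>k\<close> solutions of
  \<open>y\<^sup>k = 1\<close> with fibres of size at most \<open>n\<close>, so all bounds are attained.
\<close>

lemma
  fixes n k :: nat
  assumes nk: "n * k = card (UNIV :: 'a::{finite,field} set) - 1"
  shows card_roots_of_unity: "card {x::'a. x ^ n = 1} = n"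
    and range_power_nonzero: "(\<lambda>x. x ^ n) ` (UNIV - {0::'a}) = {y. y ^ k = 1}"
proof -
  have "n * k > 0"
    using nk card_UNIV_field_ge_2[where 'a='a] by linarith
  then have pos: "n > 0" "k > 0"
    by auto
  let ?A = "UNIV - {0::'a}" and ?B = "{y::'a. y ^ k = 1}"
  have into: "(\<lambda>x. x ^ n) ` ?A \<subseteq> ?B"
    using power_card_minus_one_eq_1 nk by (auto simp flip: power_mult)
  have fibre: "card {x\<in>?A. x ^ n = b} = n" if "b \<in> ?B" for b
  proof (rule card_fibres_eq_if_bounded[OF _ _ into card_power_eq_le[OF pos(2)]])
    show "card ?A = k * n"
      using nk by (simp add: card_Diff_singleton mult.commute)
    show "card {x\<in>?A. x ^ n = b} \<le> n" for b
      using card_power_eq_le[OF pos(1), of b] by (rule order.trans[rotated]) (auto intro: card_mono)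
  qed (use that in auto)
  have "{x\<in>?A. x ^ n = 1} = {x. x ^ n = 1}"
    using pos by (auto simp: power_0_left)
  then show "card {x::'a. x ^ n = 1} = n"
    using fibre[of 1] by simp
  show "(\<lambda>x. x ^ n) ` ?A = ?B"
  proof
    show "?B \<subseteq> (\<lambda>x. x ^ n) ` ?A"
    proof
      fix b assume "b \<in> ?B"
      then have "{x\<in>?A. x ^ n = b} \<noteq> {}"
        using fibre pos by (metis card.empty less_irrefl)
      then show "b \<in> (\<lambda>x. x ^ n) ` ?A"
        by blast
    qed
  qed (fact into)
qed

section \<open>Coprimality and common roots\<close>

lemma prod_linear_factors_dvd:
  fixes p :: "'a::field poly"
  assumes "finite A" "\<And>a. a \<in> A \<Longrightarrow> poly p a = 0"
  shows "(\<Prod>a\<in>A. [:-a, 1:]) dvd p"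
  using assms
proof (induction A arbitrary: p rule: finite_induct)
  case (insert x A)
  then obtain r where p: "p = [:-x, 1:] * r"
    by (metis insertI1 dvdE poly_eq_0_iff_dvd)
  have "poly r a = 0" if "a \<in> A" for a
    using insert.prems[of a] insert.hyps(2) that by (force simp: p)
  then have "(\<Prod>a\<in>A. [:-a, 1:]) dvd r"
    by (rule insert.IH)
  then show ?case
    unfolding p prod.insert[OF insert.hyps] by (rule mult_dvd_mono[OF dvd_refl])
qed simp

lemma coprime_iff_no_common_root:
  fixes p q :: "'a::field_gcd poly"
  assumes "q \<noteq> 0" and splits: "card {x. poly q x = 0} = degree q"
  shows "coprime p q \<longleftrightarrow> (\<forall>x. poly q x = 0 \<longrightarrow> poly p x \<noteq> 0)"
proof
  assume "coprime p q"
  show "\<forall>x. poly q x = 0 \<longrightarrow> poly p x \<noteq> 0"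
  proof (intro allI impI notI)
    fix x assume "poly q x = 0" "poly p x = 0"
    then have "is_unit [:-x, 1:]"
      using \<open>coprime p q\<close> coprime_common_divisor poly_eq_0_iff_dvd by blast
    then show False
      by (simp add: is_unit_iff_degree)
  qed
next
  assume no_common: "\<forall>x. poly q x = 0 \<longrightarrow> poly p x \<noteq> 0"
  define Z where "Z = {x. poly q x = 0}"
  define r where "r = (\<Prod>z\<in>Z. [:-z, 1:])"
  have "finite Z"
    unfolding Z_def using \<open>q \<noteq> 0\<close> by (rule poly_roots_finite)
  then have "r dvd q"
    unfolding r_def by (rule prod_linear_factors_dvd) (simp add: Z_def)
  then obtain u where q: "q = r * u"
    by (elim dvdE)
  have "degree r = degree q"
    using splits by (simp add: r_def Z_def degree_prod_eq_sum_degree)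
  then have "is_unit u"
    using \<open>q \<noteq> 0\<close> by (simp add: q degree_mult_eq is_unit_iff_degree)
  moreover have "coprime p r"
    unfolding r_def
  proof (rule prod_coprime_right)
    fix z assume "z \<in> Z"
    then have "\<not> [:-z, 1:] dvd p"
      using no_common by (simp add: Z_def poly_eq_0_iff_dvd[symmetric])
    then show "coprime p [:-z, 1:]"
      by (metis coprime_commute prime_elem_imp_coprime prime_elem_linear_field_poly one_neq_zero)
  qed
  ultimately show "coprime p q"
    by (simp add: q is_unit_right_imp_coprime)
qed

lemma gcd_X_power_minus_1_eq_1_iff:
  fixes p :: "'a::field_gcd poly"
  assumes "card {z :: 'a. z ^ m = 1} = m" "m > 0"
  shows "gcd p (monom 1 m - 1) = 1 \<longleftrightarrow> (\<forall>z. z ^ m = 1 \<longrightarrow> poly p z \<noteq> 0)"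
proof -
  have roots: "poly (monom 1 m - 1) z = 0 \<longleftrightarrow> z ^ m = 1" for z :: 'a
    by (simp add: poly_monom)
  have "degree (monom 1 m + - 1 :: 'a poly) = m"
    using \<open>m > 0\<close> by (subst degree_add_eq_left) (simp_all add: degree_monom_eq)
  then have deg: "degree (monom 1 m - 1 :: 'a poly) = m"
    by simp
  then have "monom 1 m - 1 \<noteq> (0 :: 'a poly)"
    using \<open>m > 0\<close> by auto
  moreover have "card {z :: 'a. poly (monom 1 m - 1) z = 0} = degree (monom 1 m - 1 :: 'a poly)"
    unfolding roots deg by (rule assms(1))
  ultimately have "coprime p (monom 1 m - 1) \<longleftrightarrow> (\<forall>z. poly (monom 1 m - 1) z = 0 \<longrightarrow> poly p z \<noteq> 0)"
    by (rule coprime_iff_no_common_root)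
  then show ?thesis
    unfolding coprime_iff_gcd_eq_1[symmetric] roots .
qed

lemma degree_1_dvd_iff_root:
  fixes g p :: "'a::field poly"
  assumes "degree g = 1" "poly g z = 0"
  shows "g dvd p \<longleftrightarrow> poly p z = 0"
proof -
  obtain k where g: "g = [:-z, 1:] * k"
    using assms(2) by (metis dvdE poly_eq_0_iff_dvd)
  moreover have "k \<noteq> 0"
    using assms(1) g by auto
  ultimately have "degree g = 1 + degree k"
    by (simp add: degree_mult_eq del: mult_pCons_left)
  then have "is_unit k"
    using assms(1) \<open>k \<noteq> 0\<close> by (simp add: is_unit_iff_degree)
  then show ?thesis
    unfolding g poly_eq_0_iff_dvd by (rule mult_unit_dvd_iff)
qed

section \<open>An alternating binomial sieve\<close>

text \<open>The coefficient of \<open>X\<^sup>t\<close> in \<open>(1 - X)\<^sup>r \<Sum>\<^sub>j s j X\<^sup>j\<close>.\<close>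

definition alt_binom_conv :: "(nat \<Rightarrow> int) \<Rightarrow> nat \<Rightarrow> nat \<Rightarrow> int" where
  "alt_binom_conv s t r = (\<Sum>i\<le>t. (-1) ^ i * int (r choose i) * s (t - i))"

lemma alt_binom_conv_0_right: "alt_binom_conv s t 0 = s t"
  unfolding alt_binom_conv_def by (simp add: sum.atMost_shift)

lemma alt_binom_conv_0_left: "alt_binom_conv s 0 r = s 0"
  unfolding alt_binom_conv_def by simp

lemma alt_binom_conv_Suc_Suc:
  "alt_binom_conv s (Suc t) (Suc r) = alt_binom_conv s (Suc t) r - alt_binom_conv s t r"
proof -
  have "alt_binom_conv s (Suc t) (Suc r)
      = s (Suc t) + (\<Sum>i\<le>t. (-1) ^ Suc i * int (r choose Suc i) * s (t - i))
        + (\<Sum>i\<le>t. (-1) ^ Suc i * int (r choose i) * s (t - i))"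
    unfolding alt_binom_conv_def
    by (subst sum.atMost_Suc_shift) (simp add: sum.distrib[symmetric] algebra_simps)
  also have "s (Suc t) + (\<Sum>i\<le>t. (-1) ^ Suc i * int (r choose Suc i) * s (t - i))
      = alt_binom_conv s (Suc t) r"
    unfolding alt_binom_conv_def by (subst sum.atMost_Suc_shift) simp
  also have "(\<Sum>i\<le>t. (-1) ^ Suc i * int (r choose i) * s (t - i)) = - alt_binom_conv s t r"
    unfolding alt_binom_conv_def by (simp add: sum_negf[symmetric])
  finally show ?thesis
    by simp
qed

lemma alt_binom_conv_split_last:
  "alt_binom_conv s t r
     = (\<Sum>i<t. (-1) ^ i * int (r choose i) * s (t - i)) + (-1) ^ t * int (r choose t) * s 0"
  unfolding alt_binom_conv_def by (simp add: lessThan_Suc_atMost[symmetric])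

lemma sieve_eq_alt_binom_conv:
  fixes N :: "nat \<Rightarrow> 'b set \<Rightarrow> int"
  assumes "finite R" "R \<subseteq> U"
    and N_empty: "\<And>t. N t {} = s t"
    and N_insert_0: "\<And>z R. N 0 (insert z R) = N 0 R"
    and N_insert_Suc: "\<And>z R t. z \<in> U \<Longrightarrow> z \<notin> R \<Longrightarrow> N (Suc t) (insert z R) = N (Suc t) R - N t R"
  shows "N t R = alt_binom_conv s t (card R)"
  using assms(1,2)
proof (induction R arbitrary: t rule: finite_induct)
  case empty
  then show ?case
    by (simp add: N_empty alt_binom_conv_0_right)
next
  case (insert z R)
  then show ?case
    by (cases t) (simp_all add: N_insert_0 N_insert_Suc alt_binom_conv_0_left alt_binom_conv_Suc_Suc)
qed

section \<open>Self-reciprocal polynomials\<close>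

lemma coeff_tilde:
  "coeff (tilde q f) n = (if n > degree f then 0 else coeff f (degree f - n) ^ q)"
proof -
  have "coeff (tilde q f) n
      = (\<Sum>i\<le>degree f. if i = degree f - n \<and> n \<le> degree f then coeff f i ^ q else 0)"
    unfolding tilde_def conjq_def coeff_sum coeff_monom by (rule sum.cong) auto
  then show ?thesis
    by (simp add: sum.delta)
qed

lemma tilde_eq_reflect_map_poly:
  assumes "q > 0"
  shows "tilde q f = reflect_poly (map_poly (\<lambda>x. x ^ q) f)"
proof (rule poly_eqI)
  fix n
  have "degree (map_poly (\<lambda>x. x ^ q) f) = degree f"
    by (rule degree_map_poly) (use assms in auto)
  then show "coeff (tilde q f) n = coeff (reflect_poly (map_poly (\<lambda>x. x ^ q) f)) n"
    using assms by (simp add: coeff_tilde coeff_reflect_poly coeff_map_poly)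
qed

lemma tilde_linear: "b \<noteq> 0 \<Longrightarrow> tilde q [:a, b:] = [:b ^ q, a ^ q:]"
  unfolding tilde_def conjq_def by (simp add: monom_0 monom_Suc)

lemma tilde_eq_self_iff:
  "tilde q L = L \<longleftrightarrow> (\<forall>j\<le>degree L. coeff L j = coeff L (degree L - j) ^ q)"
proof
  assume eq: "tilde q L = L"
  show "\<forall>j\<le>degree L. coeff L j = coeff L (degree L - j) ^ q"
  proof (intro allI impI)
    fix j assume "j \<le> degree L"
    then have "coeff (tilde q L) j = coeff L (degree L - j) ^ q"
      by (simp add: coeff_tilde)
    then show "coeff L j = coeff L (degree L - j) ^ q"
      by (simp add: eq)
  qed
next
  assume sym: "\<forall>j\<le>degree L. coeff L j = coeff L (degree L - j) ^ q"
  show "tilde q L = L"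
  proof (rule poly_eqI)
    fix n
    show "coeff (tilde q L) n = coeff L n"
      using sym[rule_format, of n] by (cases "n \<le> degree L") (simp_all add: coeff_tilde coeff_eq_0)
  qed
qed

definition num_self_reciprocal :: "nat \<Rightarrow> nat \<Rightarrow> int" where
  "num_self_reciprocal q t = (if t = 0 then int q - 1 else (int q ^ 2 - 1) * int q ^ (t - 1))"

locale finite_field_square =
  fixes q :: nat and field_type :: "'a::{finite,field} itself"
  assumes prime_power: "\<exists>p k. prime p \<and> k > 0 \<and> q = p ^ k"
    and card_UNIV: "card (UNIV :: 'a set) = q ^ 2"
begin

lemma q_ge_2: "q \<ge> 2"
proof (rule ccontr)
  assume "\<not> q \<ge> 2"
  then have "q ^ 2 \<le> 1 ^ 2"
    by (intro power_mono) simp_all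
  then show False
    using card_UNIV card_UNIV_field_ge_2[where 'a='a] by simp
qed

lemma prime_CHAR: "prime CHAR('a)"
  by (rule prime_CHAR_semidom[OF finite_imp_CHAR_pos]) simp

lemma q_CHAR_power: "\<exists>k. q = CHAR('a) ^ k"
proof -
  obtain p k where p: "prime p" "q = p ^ k"
    using prime_power by blast
  have "CHAR('a) dvd p ^ (2 * k)"
    using CHAR_dvd_CARD[where 'a='a] card_UNIV p(2)
    by (simp add: power_mult_distrib power_mult mult.commute)
  then have "CHAR('a) = p"
    using prime_CHAR p(1) prime_dvd_power primes_dvd_imp_eq by blast
  then show ?thesis
    using p(2) by blast
qed

lemma frobenius_add: "(x + y :: 'a) ^ q = x ^ q + y ^ q"
  using q_CHAR_power freshmans_dream'[OF prime_CHAR] by blast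

lemma frobenius_sum: "(sum f A :: 'a) ^ q = (\<Sum>i\<in>A. f i ^ q)"
  using q_CHAR_power freshmans_dream_sum'[OF prime_CHAR] by blast

lemma frobenius_uminus: "(- x :: 'a) ^ q = - (x ^ q)"
  using frobenius_add[of x "- x"] q_ge_2 by (simp add: add_eq_0_iff zero_power)

lemma frobenius_frobenius: "((x :: 'a) ^ q) ^ q = x"
  using power_card_eq_self[of x] by (simp add: card_UNIV power2_eq_square power_mult)

lemma card_UNIV_minus_1: "card (UNIV :: 'a set) - 1 = (q - 1) * (q + 1)"
  using q_ge_2 by (simp add: card_UNIV power2_eq_square algebra_simps)

lemma card_fixed_field: "card {c :: 'a. c ^ q = c} = q"
proof -
  have "x ^ q = x * x ^ (q - 1)" for x :: 'a
    using q_ge_2 power_Suc[of x "q - 1"] by (simp add: Suc_diff_1)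
  then have "{c :: 'a. c ^ q = c} = insert 0 {c. c ^ (q - 1) = 1}"
    using q_ge_2 by (auto simp: power_0_left)
  moreover have "card {c :: 'a. c ^ (q - 1) = 1} = q - 1"
    using card_roots_of_unity[OF card_UNIV_minus_1[symmetric]] .
  moreover have "0 \<notin> {c :: 'a. c ^ (q - 1) = 1}"
    using q_ge_2 by (simp add: power_0_left)
  ultimately show ?thesis
    using q_ge_2 by simp
qed

lemma hilbert_90:
  assumes "b ^ (q + 1) = (1 :: 'a)"
  obtains c where "c \<noteq> 0" "c ^ (q - 1) = b"
proof -
  have "b \<in> (\<lambda>x. x ^ (q - 1)) ` (UNIV - {0 :: 'a})"
    using assms range_power_nonzero[OF card_UNIV_minus_1[symmetric]] by simp
  then show thesis
    using that by auto
qed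

lemma card_roots_of_unity_dvd:
  assumes "m * d = q + 1"
  shows "card {z :: 'a. z ^ m = 1} = m"
proof (rule card_roots_of_unity)
  show "m * (d * (q - 1)) = card (UNIV :: 'a set) - 1"
    unfolding card_UNIV_minus_1 mult.assoc[symmetric] assms by (rule mult.commute)
qed

lemma tilde_mult: "tilde q (f * g :: 'a poly) = tilde q f * tilde q g"
proof -
  have "map_poly (\<lambda>x. x ^ q) (f * g) = map_poly (\<lambda>x. x ^ q) f * map_poly (\<lambda>x. x ^ q) g"
    by (rule poly_eqI)
      (use q_ge_2 in \<open>simp add: coeff_map_poly coeff_mult frobenius_sum power_mult_distrib\<close>)
  then show ?thesis
    using q_ge_2 by (simp add: tilde_eq_reflect_map_poly reflect_poly_mult)
qed

definition conj_palindromes :: "nat \<Rightarrow> 'a poly set" where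
  "conj_palindromes t = {L. degree L \<le> t \<and> (\<forall>j\<le>t. coeff L j = coeff L (t - j) ^ q)}"

definition self_reciprocal :: "nat \<Rightarrow> 'a poly set" where
  "self_reciprocal t = {L. L \<noteq> 0 \<and> degree L = t \<and> tilde q L = L}"

text \<open>The symmetry condition loops as a rewrite rule; it is only used through instances of
  the following destruction rule.\<close>

lemma conj_palindromesD:
  assumes "L \<in> conj_palindromes t"
  shows "degree L \<le> t" and "j \<le> t \<Longrightarrow> coeff L j = coeff L (t - j) ^ q"
  using assms unfolding conj_palindromes_def by blast+

lemma self_reciprocal_iff:
  "L \<in> self_reciprocal t \<longleftrightarrow> L \<in> conj_palindromes t \<and> coeff L t \<noteq> 0"
proof (cases "degree L = t")
  case True
  then have "L \<noteq> 0 \<longleftrightarrow> coeff L t \<noteq> 0"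
    by auto
  then show ?thesis
    using True unfolding self_reciprocal_def conj_palindromes_def tilde_eq_self_iff
    by (simp add: conj_commute)
next
  case False
  then have "\<not> (degree L \<le> t \<and> coeff L t \<noteq> 0)"
    using le_degree[of L t] le_antisym by blast
  then show ?thesis
    using False unfolding self_reciprocal_def conj_palindromes_def by blast
qed

definition frame :: "nat \<Rightarrow> 'a \<times> 'a poly \<Rightarrow> 'a poly" where
  "frame t = (\<lambda>(a, M). [:a ^ q:] + pCons 0 M + monom a (t + 2))"

lemma coeff_frame:
  assumes "degree M \<le> t"
  shows "coeff (frame t (a, M)) n = (if n = 0 then a ^ q else if n = t + 2 then a else coeff M (n - 1))"
proof -
  have "coeff M (t + 1) = 0"
    using assms by (simp add: coeff_eq_0)
  then show ?thesis
    by (cases n) (auto simp: frame_def coeff_monom)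
qed

lemma frame_in_conj_palindromes:
  assumes "M \<in> conj_palindromes t"
  shows "frame t (a, M) \<in> conj_palindromes (t + 2)"
proof -
  note deg = conj_palindromesD(1)[OF assms] and sym = conj_palindromesD(2)[OF assms]
  have "degree (frame t (a, M)) \<le> t + 2"
    by (rule degree_le) (use deg in \<open>auto simp: coeff_frame coeff_eq_0\<close>)
  moreover have "coeff (frame t (a, M)) j = coeff (frame t (a, M)) (t + 2 - j) ^ q"
    if j: "j \<le> t + 2" for j
  proof -
    consider "j = 0" | "j = t + 2" | "0 < j" "j < t + 2"
      using j by linarith
    then show ?thesis
    proof cases
      case 1
      then show ?thesis
        using deg by (simp add: coeff_frame)
    next
      case 2
      then show ?thesis
        using deg by (simp add: coeff_frame frobenius_frobenius)
    next
      case 3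
      then have "t - (j - 1) = t + 2 - j - 1"
        by simp
      then show ?thesis
        using 3 deg sym[of "j - 1"] by (auto simp: coeff_frame)
    qed
  qed
  ultimately show ?thesis
    unfolding conj_palindromes_def by blast
qed

lemma inj_on_frame: "inj_on (frame t) (UNIV \<times> conj_palindromes t)"
proof (rule inj_onI, clarify)
  fix a M b N
  assume "M \<in> conj_palindromes t" "N \<in> conj_palindromes t" and eq: "frame t (a, M) = frame t (b, N)"
  then have deg: "degree M \<le> t" "degree N \<le> t"
    by (auto dest: conj_palindromesD(1))
  have coeff_eq: "coeff (frame t (a, M)) n = coeff (frame t (b, N)) n" for n
    using eq by simp
  from coeff_eq[of "t + 2"] have "a = b"
    using deg by (simp add: coeff_frame)
  moreover have "coeff M n = coeff N n" for n
    using coeff_eq[of "Suc n"] deg by (cases "n = t + 1") (auto simp: coeff_frame coeff_eq_0)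
  ultimately show "a = b \<and> M = N"
    by (simp add: poly_eq_iff)
qed

lemma conj_palindromes_add_2: "conj_palindromes (t + 2) = frame t ` (UNIV \<times> conj_palindromes t)"
proof
  show "conj_palindromes (t + 2) \<subseteq> frame t ` (UNIV \<times> conj_palindromes t)"
  proof
    fix L assume L: "L \<in> conj_palindromes (t + 2)"
    note deg = conj_palindromesD(1)[OF L] and sym = conj_palindromesD(2)[OF L]
    define M where "M = poly_cutoff (t + 1) (poly_shift 1 L)"
    have coeff_M: "coeff M j = (if j < t + 1 then coeff L (j + 1) else 0)" for j
      by (simp add: M_def coeff_poly_cutoff coeff_poly_shift)
    have "degree M \<le> t"
      by (rule degree_le) (simp add: coeff_M)
    moreover have "coeff M j = coeff M (t - j) ^ q" if "j \<le> t" for j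
      using that sym[of "j + 1"] by (simp add: coeff_M Suc_diff_le less_Suc_eq_le)
    ultimately have M: "M \<in> conj_palindromes t"
      unfolding conj_palindromes_def by blast
    have "L = frame t (coeff L (t + 2), M)"
      by (rule poly_eqI)
        (use deg sym[of 0] \<open>degree M \<le> t\<close> in \<open>auto simp: coeff_frame coeff_M coeff_eq_0\<close>)
    with M show "L \<in> frame t ` (UNIV \<times> conj_palindromes t)"
      by blast
  qed
next
  show "frame t ` (UNIV \<times> conj_palindromes t) \<subseteq> conj_palindromes (t + 2)"
    by (rule image_subsetI) (clarify, rule frame_in_conj_palindromes)
qed

lemma conj_palindromes_0: "conj_palindromes 0 = (\<lambda>c. [:c:]) ` {c. c ^ q = c}"
proof (intro equalityI subsetI)
  fix L assume "L \<in> conj_palindromes 0"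
  then have "degree L = 0" "coeff L 0 ^ q = coeff L 0"
    using conj_palindromesD(1)[of L 0] conj_palindromesD(2)[of L 0 0] by simp_all
  then show "L \<in> (\<lambda>c. [:c:]) ` {c. c ^ q = c}"
    by (metis (mono_tags) degree_0_id image_eqI mem_Collect_eq)
next
  fix L :: "'a poly" assume "L \<in> (\<lambda>c. [:c:]) ` {c. c ^ q = c}"
  then obtain c where "c ^ q = c" "L = [:c:]"
    by blast
  then show "L \<in> conj_palindromes 0"
    unfolding conj_palindromes_def by simp
qed

lemma conj_palindromes_1: "conj_palindromes 1 = range (\<lambda>a. [:a ^ q, a:])"
proof (intro equalityI subsetI)
  fix L assume "L \<in> conj_palindromes 1"
  then have "degree L \<le> 1" "coeff L 0 = coeff L 1 ^ q"
    using conj_palindromesD(1)[of L 1] conj_palindromesD(2)[of L 1 0] by simp_all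
  then have "L = [:coeff L 1 ^ q, coeff L 1:]"
    by (intro poly_eqI) (auto simp: coeff_pCons coeff_eq_0 split: nat.split)
  then show "L \<in> range (\<lambda>a. [:a ^ q, a:])"
    by blast
next
  fix L :: "'a poly" assume "L \<in> range (\<lambda>a. [:a ^ q, a:])"
  then obtain a where "L = [:a ^ q, a:]"
    by blast
  moreover have "coeff [:a ^ q, a:] j = coeff [:a ^ q, a:] (1 - j) ^ q" if "j \<le> 1" for j
    using that frobenius_frobenius[of a] by (cases j) auto
  moreover have "degree [:a ^ q, a:] \<le> 1"
    by (simp add: degree_pCons_le)
  ultimately show "L \<in> conj_palindromes 1"
    unfolding conj_palindromes_def by blast
qed

lemma card_conj_palindromes: "card (conj_palindromes t) = q ^ (t + 1)"
proof (induction t rule: less_induct)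
  case (less t)
  consider "t = 0" | "t = 1" | u where "t = u + 2"
    by (metis One_nat_def add_2_eq_Suc' not0_implies_Suc)
  then show ?case
  proof cases
    case 1
    have "inj (\<lambda>c :: 'a. [:c:])"
      by (auto intro: injI)
    then show ?thesis
      using 1 card_fixed_field by (simp add: conj_palindromes_0 card_image inj_on_subset)
  next
    case 2
    have "inj (\<lambda>a :: 'a. [:a ^ q, a:])"
      by (auto intro: injI)
    then have "card (conj_palindromes 1) = q ^ 2"
      unfolding conj_palindromes_1 by (simp add: card_image card_UNIV)
    then show ?thesis
      using 2 by (simp add: power2_eq_square)
  next
    case 3
    have "card (conj_palindromes (u + 2)) = card (UNIV :: 'a set) * card (conj_palindromes u)"
      unfolding conj_palindromes_add_2 card_image[OF inj_on_frame] by (simp add: card_cartesian_product)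
    then show ?thesis
      using 3 less[of u] by (simp add: card_UNIV flip: power_add)
  qed
qed

lemma finite_self_reciprocal: "finite (self_reciprocal t)"
proof (rule finite_subset)
  show "finite (conj_palindromes t)"
    using card_conj_palindromes[of t] q_ge_2 by (intro card_ge_0_finite) simp
qed (auto simp: self_reciprocal_iff)

lemma self_reciprocal_add_2:
  "self_reciprocal (t + 2) = frame t ` ((UNIV - {0}) \<times> conj_palindromes t)"
proof -
  have coeff_top: "coeff (frame t (a, M)) (t + 2) = a" if "M \<in> conj_palindromes t" for a M
    using conj_palindromesD(1)[OF that] by (simp add: coeff_frame)
  show ?thesis
  proof (intro equalityI subsetI)
    fix L assume "L \<in> self_reciprocal (t + 2)"
    then obtain a M where "M \<in> conj_palindromes t" "L = frame t (a, M)" "coeff L (t + 2) \<noteq> 0"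
      unfolding self_reciprocal_iff conj_palindromes_add_2 by blast
    then show "L \<in> frame t ` ((UNIV - {0}) \<times> conj_palindromes t)"
      using coeff_top by blast
  next
    fix L assume "L \<in> frame t ` ((UNIV - {0}) \<times> conj_palindromes t)"
    then obtain a M where "a \<noteq> 0" "M \<in> conj_palindromes t" "L = frame t (a, M)"
      by blast
    then have "L \<in> frame t ` (UNIV \<times> conj_palindromes t)" "coeff L (t + 2) \<noteq> 0"
      using coeff_top by auto
    then show "L \<in> self_reciprocal (t + 2)"
      unfolding self_reciprocal_iff conj_palindromes_add_2 by blast
  qed
qed

lemma card_self_reciprocal: "int (card (self_reciprocal t)) = num_self_reciprocal q t"
proof -
  consider "t = 0" | "t = 1" | u where "t = u + 2"
    by (metis One_nat_def add_2_eq_Suc' not0_implies_Suc)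
  then show ?thesis
  proof cases
    case 1
    have "self_reciprocal 0 = (\<lambda>c. [:c:]) ` ({c :: 'a. c ^ q = c} - {0})"
      unfolding set_eq_iff self_reciprocal_iff conj_palindromes_0 by auto
    moreover have "inj (\<lambda>c :: 'a. [:c:])"
      by (auto intro: injI)
    ultimately show ?thesis
      using 1 card_fixed_field q_ge_2
      by (simp add: num_self_reciprocal_def card_image inj_on_subset card_Diff_singleton of_nat_diff)
  next
    case 2
    have "self_reciprocal 1 = (\<lambda>a. [:a ^ q, a:]) ` (UNIV - {0 :: 'a})"
      unfolding set_eq_iff self_reciprocal_iff conj_palindromes_1 by auto
    moreover have "inj (\<lambda>a :: 'a. [:a ^ q, a:])"
      by (auto intro: injI)
    ultimately show ?thesis
      using 2 q_ge_2 by (simp add: num_self_reciprocal_def card_image inj_on_subset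
          card_Diff_singleton card_UNIV of_nat_diff)
  next
    case 3
    have "inj_on (frame u) ((UNIV - {0 :: 'a}) \<times> conj_palindromes u)"
      by (rule inj_on_subset[OF inj_on_frame]) blast
    then have "card (self_reciprocal (u + 2)) = (q ^ 2 - 1) * q ^ (u + 1)"
      unfolding self_reciprocal_add_2 card_image[OF \<open>inj_on _ _\<close>]
      by (simp add: card_cartesian_product card_Diff_singleton card_UNIV card_conj_palindromes)
    then show ?thesis
      using 3 q_ge_2 by (simp add: num_self_reciprocal_def of_nat_diff)
  qed
qed

lemma self_reciprocal_linear_factor:
  assumes "z ^ (q + 1) = (1 :: 'a)"
  obtains g where "degree g = 1" "tilde q g = g" "\<And>x. poly g x = 0 \<longleftrightarrow> x = z"
proof -
  have "(- z) ^ (q + 1) = 1"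
    using assms by (simp add: frobenius_uminus)
  then obtain c where c: "c \<noteq> 0" "c ^ (q - 1) = - z"
    by (rule hilbert_90)
  have "c ^ q = c * c ^ (q - 1)"
    using q_ge_2 power_Suc[of c "q - 1"] by (simp add: Suc_diff_1)
  then have root: "poly [:c ^ q, c:] x = c * (x - z)" for x
    using c by (simp add: algebra_simps)
  show thesis
  proof (rule that)
    show "degree [:c ^ q, c:] = 1"
      using c by simp
    show "tilde q [:c ^ q, c:] = [:c ^ q, c:]"
      using c by (simp add: tilde_linear frobenius_frobenius)
    show "poly [:c ^ q, c:] x = 0 \<longleftrightarrow> x = z" for x
      unfolding root using c by simp
  qed
qed

lemma self_reciprocal_Suc_root:
  assumes g: "degree g = 1" "tilde q g = g" "poly g z = 0"
  shows "{L \<in> self_reciprocal (Suc t). poly L z = 0} = (\<lambda>h. g * h) ` self_reciprocal t"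
proof (intro equalityI subsetI)
  fix L assume "L \<in> {L \<in> self_reciprocal (Suc t). poly L z = 0}"
  then have L: "L \<noteq> 0" "degree L = Suc t" "tilde q L = L" "poly L z = 0"
    by (auto simp: self_reciprocal_def)
  then obtain h where h: "L = g * h"
    using degree_1_dvd_iff_root[OF g(1,3)] by (metis dvdE)
  have "g \<noteq> 0" "h \<noteq> 0"
    using g(1) L(1) h by auto
  then have "degree h = t"
    using L(2) g(1) h by (simp add: degree_mult_eq)
  moreover have "tilde q h = h"
    using L(3) \<open>g \<noteq> 0\<close> by (simp add: h tilde_mult g(2))
  ultimately show "L \<in> (\<lambda>h. g * h) ` self_reciprocal t"
    using h \<open>h \<noteq> 0\<close> by (auto simp: self_reciprocal_def)
next
  fix L assume "L \<in> (\<lambda>h. g * h) ` self_reciprocal t"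
  then obtain h where "h \<in> self_reciprocal t" "L = g * h"
    by blast
  moreover have "g \<noteq> 0"
    using g(1) by auto
  ultimately show "L \<in> {L \<in> self_reciprocal (Suc t). poly L z = 0}"
    using g by (auto simp: self_reciprocal_def degree_mult_eq tilde_mult)
qed

definition num_avoiding :: "nat \<Rightarrow> 'a set \<Rightarrow> int" where
  "num_avoiding t R = int (card {L \<in> self_reciprocal t. \<forall>r\<in>R. poly L r \<noteq> 0})"

lemma num_avoiding_insert_0: "num_avoiding 0 (insert z R) = num_avoiding 0 R"
proof -
  have "poly L z \<noteq> 0" if "L \<in> self_reciprocal 0" for L
    using that by (auto simp: self_reciprocal_def elim: degree_eq_zeroE)
  then show ?thesis
    unfolding num_avoiding_def by (metis (lifting) insert_iff)
qed

lemma num_avoiding_insert_Suc: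
  assumes "z ^ (q + 1) = (1 :: 'a)" "z \<notin> R"
  shows "num_avoiding (Suc t) (insert z R) = num_avoiding (Suc t) R - num_avoiding t R"
proof -
  obtain g where g: "degree g = 1" "tilde q g = g" and roots: "\<And>x. poly g x = 0 \<longleftrightarrow> x = z"
    using self_reciprocal_linear_factor[OF assms(1)] by blast
  define A where "A = {L \<in> self_reciprocal (Suc t). \<forall>r\<in>R. poly L r \<noteq> 0}"
  define B where "B = {h \<in> self_reciprocal t. \<forall>r\<in>R. poly h r \<noteq> 0}"
  have g_nonzero_on_R: "poly g r \<noteq> 0" if "r \<in> R" for r
    using roots[of r] assms(2) that by auto
  have "{L \<in> A. poly L z = 0} = {L \<in> (\<lambda>h. g * h) ` self_reciprocal t. \<forall>r\<in>R. poly L r \<noteq> 0}"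
    unfolding A_def self_reciprocal_Suc_root[OF g roots[of z, THEN iffD2, OF refl], symmetric]
    by auto
  also have "\<dots> = (\<lambda>h. g * h) ` B"
    unfolding B_def using g_nonzero_on_R by auto
  finally have vanishing: "{L \<in> A. poly L z = 0} = (\<lambda>h. g * h) ` B" .
  have "g \<noteq> 0"
    using g(1) by auto
  then have "inj_on (\<lambda>h. g * h) B"
    by (auto intro: inj_onI)
  with vanishing have card_vanishing: "card {L \<in> A. poly L z = 0} = card B"
    by (simp add: card_image)
  have "finite A"
    unfolding A_def using finite_self_reciprocal by simp
  have "{L \<in> self_reciprocal (Suc t). \<forall>r\<in>insert z R. poly L r \<noteq> 0} = A - {L \<in> A. poly L z = 0}"
    unfolding A_def by auto
  then have "num_avoiding (Suc t) (insert z R) = int (card A - card {L \<in> A. poly L z = 0})"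
    unfolding num_avoiding_def using \<open>finite A\<close> by (simp add: card_Diff_subset)
  also have "\<dots> = int (card A) - int (card B)"
    using card_vanishing card_mono[OF \<open>finite A\<close>, of "{L \<in> A. poly L z = 0}"]
    by (simp add: of_nat_diff)
  finally show ?thesis
    by (simp add: num_avoiding_def A_def B_def)
qed

lemma num_avoiding_eq_alt_binom_conv:
  assumes "finite R" "\<forall>z\<in>R. z ^ (q + 1) = 1"
  shows "num_avoiding t R = alt_binom_conv (num_self_reciprocal q) t (card R)"
proof (rule sieve_eq_alt_binom_conv[where U = "{z. z ^ (q + 1) = 1}"])
  show "num_avoiding t {} = num_self_reciprocal q t" for t
    by (simp add: num_avoiding_def card_self_reciprocal)
  show "num_avoiding (Suc t) (insert z R) = num_avoiding (Suc t) R - num_avoiding t R"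
    if "z \<in> {z. z ^ (q + 1) = 1}" "z \<notin> R" for z R t
    using that by (intro num_avoiding_insert_Suc) simp_all
qed (use assms num_avoiding_insert_0 in auto)

end

lemma card_self_reciprocal_coprime_X_power_minus_1:
  fixes q m d t :: nat
  assumes "\<exists>p k. prime p \<and> k > 0 \<and> q = p ^ k" "card (UNIV :: 'a::{finite,field_gcd} set) = q ^ 2"
    and "m * d = q + 1"
  shows "int (card {L :: 'a poly. degree L = t \<and> tilde q L = L \<and> gcd L (monom 1 m - 1) = 1})
    = alt_binom_conv (num_self_reciprocal q) t m"
proof -
  interpret finite_field_square q "TYPE('a)"
    by unfold_locales (fact assms)+
  define Z where "Z = {z :: 'a. z ^ m = 1}"
  have card_Z: "card Z = m"
    using assms(3) unfolding Z_def by (rule card_roots_of_unity_dvd)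
  have "m > 0"
    using assms(3) by (cases m) simp_all
  have "\<forall>z\<in>Z. z ^ (q + 1) = 1"
    unfolding Z_def assms(3)[symmetric] power_mult by simp
  have "L \<noteq> 0" if "\<forall>z\<in>Z. poly L z \<noteq> 0" for L :: "'a poly"
    using that[rule_format, of 1] by (auto simp: Z_def)
  then have "{L :: 'a poly. degree L = t \<and> tilde q L = L \<and> gcd L (monom 1 m - 1) = 1}
      = {L \<in> self_reciprocal t. \<forall>z\<in>Z. poly L z \<noteq> 0}"
    using gcd_X_power_minus_1_eq_1_iff[OF card_Z[unfolded Z_def] \<open>m > 0\<close>]
    by (auto simp: self_reciprocal_def Z_def)
  then show ?thesis
    using num_avoiding_eq_alt_binom_conv[of Z t] \<open>\<forall>z\<in>Z. z ^ (q + 1) = 1\<close> card_Z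
    by (simp add: num_avoiding_def Z_def)
qed

theorem lemma2p5:
  fixes q d t :: nat
  assumes "\<exists>p k. prime p \<and> k > 0 \<and> q = p ^ k"
    and "card (UNIV :: 'a set) = q ^ 2"
    and "d > 0" and "d dvd q + 1"
    and "t < (q + 1) div d"
  shows "int (card {L :: 'a::{finite,field_gcd} poly. degree L = t \<and> tilde q L = L
                   \<and> gcd L (monom 1 ((q + 1) div d) - 1) = 1})
    = (int q ^ 2 - 1) * (\<Sum>i<t. (-1) ^ i * int (((q + 1) div d) choose i) * int q ^ (t - i - 1))
      + (-1) ^ t * (int q - 1) * int (((q + 1) div d) choose t)"
proof -
  define m where "m = (q + 1) div d"
  have "m * d = q + 1"
    using assms(4) by (simp add: m_def)
  with assms(1,2)
  have "int (card {L :: 'a poly. degree L = t \<and> tilde q L = L \<and> gcd L (monom 1 m - 1) = 1})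
      = alt_binom_conv (num_self_reciprocal q) t m"
    by (rule card_self_reciprocal_coprime_X_power_minus_1)
  also have "\<dots> = (int q ^ 2 - 1) * (\<Sum>i<t. (-1) ^ i * int (m choose i) * int q ^ (t - i - 1))
      + (-1) ^ t * (int q - 1) * int (m choose t)"
    unfolding alt_binom_conv_split_last num_self_reciprocal_def by (simp add: sum_distrib_left mult_ac)
  finally show ?thesis
    by (simp add: m_def)
qed

end
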